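(* Let $n\ge 2$, let $d:L_n\to L_n$ be any map, and put $v=\frac{n-2}{n-1}$. Suppose $d(v)\le v$. Then $d$ is a $(\odot,\vee)$-derivation on $L_n$ if and only if both of the following hold: (1) $d(v^m)=v^{m-1}\odot d(v)$ for each $m\in\{1,2,\dots,n-1\}$ (where $v^0=1$ and $v^m=v\odot\cdots\odot v$ with $m$ factors); (2) $v\odot d(1)\le d(v)$.
   Context: An MV-algebra is an algebra $(A,\oplus,{}^*,0)$ of type $(2,1,0)$ satisfying: $x\oplus(y\oplus z)=(x\oplus y)\oplus z$, $x\oplus y=y\oplus x$, $x\oplus 0=x$, $x^{**}=x$, $x\oplus 0^*=0^*$, $(x^*\oplus y)^*\oplus y=(y^*\oplus x)^*\oplus x$. Put $1=0^*$ and $x\odot y=(x^*\oplus y^* )^*$. The natural order is $x\le y$ iff $x^*\oplus y=1$, with lattice operations $x\vee y=(x\odot y^* )\oplus y$, $x\wedge y=x\odot(x^*\oplus y)$. A $(\odot,\vee)$-derivation on $A$ is a map $d:A\to A$ with $d(x\odot y)=(d(x)\odot y)\vee(x\odot d(y))$ for all $x,y\in A$. $L_n=\{0,\frac1{n-1},\dots,\frac{n-2}{n-1},1\}$ with $x\oplus y=\min\{1,x+y\}$, $x^*=1-x$. *)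

theory Defs
  imports Complex_Main
begin

definition Ln :: "nat \<Rightarrow> real set" where
  "Ln n = (\<lambda>k. real k / (real n - 1)) ` {0..n - 1}"

definition mv_oplus :: "real \<Rightarrow> real \<Rightarrow> real" where
  "mv_oplus x y = min 1 (x + y)"

definition mv_star :: "real \<Rightarrow> real" where
  "mv_star x = 1 - x"

definition mv_odot :: "real \<Rightarrow> real \<Rightarrow> real" where
  "mv_odot x y = mv_star (mv_oplus (mv_star x) (mv_star y))"

definition mv_join :: "real \<Rightarrow> real \<Rightarrow> real" where
  "mv_join x y = mv_oplus (mv_odot x (mv_star y)) y"

definition mv_le :: "real \<Rightarrow> real \<Rightarrow> bool" where
  "mv_le x y \<longleftrightarrow> mv_oplus (mv_star x) y = 1"

primrec mv_pow :: "real \<Rightarrow> nat \<Rightarrow> real" where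
  "mv_pow x 0 = 1"
| "mv_pow x (Suc m) = mv_odot x (mv_pow x m)"

definition odot_join_derivation :: "real set \<Rightarrow> (real \<Rightarrow> real) \<Rightarrow> bool" where
  "odot_join_derivation A d \<longleftrightarrow>
     (\<forall>x\<in>A. \<forall>y\<in>A. d (mv_odot x y) = mv_join (mv_odot (d x) y) (mv_odot x (d y)))"

end

theory Submission
  imports Defs
begin

text \<open>On L_n = {1, v, v^2, ..., v^(n-1) = 0} every element other than 1 is a power of the
  generator v, and \<odot> adds exponents. A (\<odot>,\<or>)-derivation is therefore forced to satisfy
  d(v^(m+1)) = v^m \<odot> d v, by induction on m, and v \<odot> d 1 \<le> d v, from d(v \<odot> 1) = d v.
  Conversely, if d has this shape, then at a pair v^a, v^b (a, b \<ge> 1) both terms of the join equal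
  v^(a+b-1) \<odot> d v; at a pair involving 1 the second condition makes one term absorb the other.\<close>

lemma mv_odot_eq: "mv_odot x y = max 0 (x + y - 1)"
  by (simp add: mv_odot_def mv_oplus_def mv_star_def min_def max_def)

lemma mv_join_eq: "mv_join x y = min 1 (max x y)"
  by (simp add: mv_join_def mv_odot_eq mv_oplus_def mv_star_def min_def max_def)

lemma mv_le_iff: "mv_le x y \<longleftrightarrow> x \<le> y"
  by (simp add: mv_le_def mv_oplus_def mv_star_def min_def)

lemma mv_odot_commute: "mv_odot x y = mv_odot y x"
  by (simp add: mv_odot_eq add.commute)

lemma mv_odot_assoc: "x \<le> 1 \<Longrightarrow> z \<le> 1 \<Longrightarrow> mv_odot (mv_odot x y) z = mv_odot x (mv_odot y z)"
  by (simp add: mv_odot_eq max_def)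

lemma mv_odot_one_left: "0 \<le> x \<Longrightarrow> mv_odot 1 x = x"
  by (simp add: mv_odot_eq)

lemma mv_odot_one_right: "0 \<le> x \<Longrightarrow> mv_odot x 1 = x"
  by (simp add: mv_odot_eq)

lemma mv_odot_zero_left: "x \<le> 1 \<Longrightarrow> mv_odot 0 x = 0"
  by (simp add: mv_odot_eq)

lemma mv_odot_nonneg: "0 \<le> mv_odot x y"
  by (simp add: mv_odot_eq)

lemma mv_odot_le_one: "x \<le> 1 \<Longrightarrow> y \<le> 1 \<Longrightarrow> mv_odot x y \<le> 1"
  by (simp add: mv_odot_eq)

lemma mv_odot_mono: "x \<le> x' \<Longrightarrow> y \<le> y' \<Longrightarrow> mv_odot x y \<le> mv_odot x' y'"
  by (simp add: mv_odot_eq)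

lemma mv_join_commute: "mv_join x y = mv_join y x"
  by (simp add: mv_join_eq max.commute)

lemma mv_join_idem: "x \<le> 1 \<Longrightarrow> mv_join x x = x"
  by (simp add: mv_join_eq)

lemma mv_join_absorb2: "x \<le> y \<Longrightarrow> y \<le> 1 \<Longrightarrow> mv_join x y = y"
  by (simp add: mv_join_eq max_def)

lemma mv_join_eq_left_imp_le: "mv_join x y = x \<Longrightarrow> y \<le> 1 \<Longrightarrow> y \<le> x"
  by (auto simp: mv_join_eq min_def max_def split: if_splits)

lemma mv_pow_bounds: "0 \<le> x \<Longrightarrow> x \<le> 1 \<Longrightarrow> 0 \<le> mv_pow x m \<and> mv_pow x m \<le> 1"
  by (induction m) (simp_all add: mv_odot_nonneg mv_odot_le_one)

lemma mv_pow_one: "0 \<le> x \<Longrightarrow> mv_pow x 1 = x"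
  by (simp add: mv_odot_one_right)

lemma mv_pow_add:
  assumes "0 \<le> x" "x \<le> 1"
  shows "mv_odot (mv_pow x a) (mv_pow x b) = mv_pow x (a + b)"
  by (induction a) (simp_all add: assms mv_odot_one_left mv_pow_bounds mv_odot_assoc)

lemma mv_pow_eq_zero:
  assumes "0 \<le> x" "x \<le> 1" "mv_pow x N = 0" "N \<le> m"
  shows "mv_pow x m = 0"
proof -
  have "mv_pow x m = mv_odot (mv_pow x N) (mv_pow x (m - N))"
    using mv_pow_add[OF assms(1,2)] assms(4) by simp
  then show ?thesis
    using assms by (simp add: mv_odot_zero_left mv_pow_bounds)
qed

lemma odot_join_derivation_pow:
  assumes der: "odot_join_derivation A d"
    and A: "A \<subseteq> {0..1}" "\<forall>x\<in>A. d x \<in> A"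
    and v: "v \<in> A" and pow: "\<And>m. mv_pow v m \<in> A"
  shows "d (mv_pow v (Suc m)) = mv_odot (mv_pow v m) (d v)"
proof (induction m)
  case 0
  have "0 \<le> v" "0 \<le> d v"
    using A v by auto
  then show ?case
    by (simp add: mv_odot_one_left mv_odot_one_right)
next
  case (Suc m)
  define p where "p = mv_pow v (Suc m)"
  have v01: "0 \<le> v" "v \<le> 1" and c01: "0 \<le> d v" "d v \<le> 1" and p01: "mv_pow v m \<le> 1" "p \<le> 1"
    using A v pow[of m] pow[of "Suc m"] by (auto simp: p_def)
  have "d (mv_odot v p) = mv_join (mv_odot (d v) p) (mv_odot v (d p))"
    using der v pow[of "Suc m"] unfolding odot_join_derivation_def p_def by blast
  also have "mv_odot v (d p) = mv_odot p (d v)"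
    unfolding p_def Suc.IH using v01 c01 p01 by (simp add: mv_odot_assoc)
  also have "mv_odot (d v) p = mv_odot p (d v)"
    by (rule mv_odot_commute)
  also have "mv_join (mv_odot p (d v)) (mv_odot p (d v)) = mv_odot p (d v)"
    using c01 p01 by (simp add: mv_join_idem mv_odot_le_one)
  finally show ?case
    by (simp add: p_def)
qed

lemma odot_join_derivation_unit:
  assumes der: "odot_join_derivation A d"
    and A: "A \<subseteq> {0..1}" "\<forall>x\<in>A. d x \<in> A"
    and v: "v \<in> A" and one: "1 \<in> A"
  shows "mv_odot v (d 1) \<le> d v"
proof -
  have "0 \<le> v" "0 \<le> d v"
    using A v by auto
  then have "d v = mv_join (d v) (mv_odot v (d 1))"
    using der v one mv_odot_one_right unfolding odot_join_derivation_def by metis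
  moreover have "v \<le> 1" "d 1 \<le> 1"
    using A v one by auto
  then have "mv_odot v (d 1) \<le> 1"
    by (rule mv_odot_le_one)
  ultimately show ?thesis
    by (metis mv_join_eq_left_imp_le)
qed

lemma odot_join_derivationI_pow:
  assumes A: "A \<subseteq> {0..1}" "\<forall>x\<in>A. d x \<in> A"
    and gen: "\<forall>x\<in>A. x = 1 \<or> (\<exists>m. x = mv_pow v (Suc m))"
    and v: "v \<in> A"
    and pow: "\<And>m. d (mv_pow v (Suc m)) = mv_odot (mv_pow v m) (d v)"
    and unit: "mv_odot v (d 1) \<le> d v"
  shows "odot_join_derivation A d"
proof -
  have v01: "0 \<le> v" "v \<le> 1" and c01: "0 \<le> d v" "d v \<le> 1"
    using A v by auto
  have p01: "0 \<le> mv_pow v m" "mv_pow v m \<le> 1" for m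
    using mv_pow_bounds[OF v01] by auto
  have powc01: "mv_odot (mv_pow v m) (d v) \<le> 1" for m
    using p01 c01 by (simp add: mv_odot_le_one)
  have one_left: "d (mv_odot 1 y) = mv_join (mv_odot (d 1) y) (mv_odot 1 (d y))"
    if y: "y \<in> A" and one: "1 \<in> A" for y
  proof -
    have d1: "0 \<le> d 1" "d 1 \<le> 1" and dy: "0 \<le> d y" "d y \<le> 1" and y01: "0 \<le> y" "y \<le> 1"
      using A y one by auto
    have "mv_odot (d 1) y \<le> d y"
      using gen y
    proof (elim ballE disjE exE)
      fix b assume yb: "y = mv_pow v (Suc b)"
      have "mv_odot (d 1) y = mv_odot (mv_odot (d 1) v) (mv_pow v b)"
        using yb d1 p01 by (simp add: mv_odot_assoc)
      also have "\<dots> = mv_odot (mv_odot v (d 1)) (mv_pow v b)"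
        by (simp add: mv_odot_commute)
      also have "\<dots> \<le> mv_odot (d v) (mv_pow v b)"
        using unit by (simp add: mv_odot_mono)
      finally show ?thesis
        using yb pow by (simp add: mv_odot_commute)
    qed (use d1 in \<open>auto simp: mv_odot_one_right\<close>)
    then show ?thesis
      using y01 dy by (simp add: mv_odot_one_left mv_join_absorb2)
  qed
  show ?thesis
    unfolding odot_join_derivation_def
  proof (intro ballI)
    fix x y assume x: "x \<in> A" and y: "y \<in> A"
    show "d (mv_odot x y) = mv_join (mv_odot (d x) y) (mv_odot x (d y))"
    proof (cases "x = 1 \<or> y = 1")
      case True
      then consider "x = 1" | "y = 1" by blast
      then show ?thesis
      proof cases
        case 1
        then show ?thesis using one_left y x by blast
      next
        case 2
        then have "d (mv_odot 1 x) = mv_join (mv_odot (d 1) x) (mv_odot 1 (d x))"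
          using one_left x y by blast
        with 2 show ?thesis
          by (simp only: mv_odot_commute[of x] mv_odot_commute[of "d x"] mv_join_commute)
      qed
    next
      case False
      then obtain a b where a: "x = mv_pow v (Suc a)" and b: "y = mv_pow v (Suc b)"
        using gen x y by blast
      note add = mv_pow_add[OF v01]
      have "mv_odot (d x) y = mv_odot (mv_odot (d v) (mv_pow v a)) (mv_pow v (Suc b))"
        using a b pow by (simp only: mv_odot_commute)
      also have "\<dots> = mv_odot (d v) (mv_pow v (Suc (a + b)))"
        using c01 p01 by (simp only: mv_odot_assoc add add_Suc_right)
      also have "\<dots> = mv_odot (mv_pow v (Suc (a + b))) (d v)"
        by (rule mv_odot_commute)
      finally have left: "mv_odot (d x) y = mv_odot (mv_pow v (Suc (a + b))) (d v)" .
      have "mv_odot x (d y) = mv_odot (mv_odot (mv_pow v (Suc a)) (mv_pow v b)) (d v)"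
        using a b pow c01 p01 by (simp only: mv_odot_assoc)
      then have right: "mv_odot x (d y) = mv_odot (mv_pow v (Suc (a + b))) (d v)"
        by (simp only: add add_Suc)
      have "mv_odot x y = mv_pow v (Suc (Suc (a + b)))"
        using a b by (simp only: add add_Suc add_Suc_right)
      then show ?thesis
        using left right pow powc01 by (simp only: mv_join_idem)
    qed
  qed
qed

text \<open>Once v^N = 0, the formula for d (v^m) with m \<le> N extends to all m, because
  d v \<le> v forces v^(m-1) \<odot> d v \<le> v^m.\<close>

lemma pow_formula_extend:
  assumes v01: "0 \<le> v" "v \<le> 1" and N: "mv_pow v N = 0" "1 \<le> N" and c: "d v \<le> v"
    and pow: "\<forall>m\<in>{1..N}. d (mv_pow v m) = mv_odot (mv_pow v (m - 1)) (d v)"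
  shows "d (mv_pow v (Suc m)) = mv_odot (mv_pow v m) (d v)"
proof (cases "Suc m \<le> N")
  case True
  then show ?thesis
    using bspec[OF pow, of "Suc m"] by simp
next
  case False
  have below: "mv_odot (mv_pow v k) (d v) \<le> mv_pow v (Suc k)" for k
    using mv_odot_mono[OF order_refl c, of "mv_pow v k"] by (simp add: mv_odot_commute)
  have vanish: "mv_odot (mv_pow v k) (d v) = 0" if "N \<le> Suc k" for k
    using below[of k] mv_pow_eq_zero[OF v01 N(1) that] mv_odot_nonneg[of "mv_pow v k" "d v"]
    by simp
  have "mv_pow v (Suc m) = mv_pow v N"
    using False mv_pow_eq_zero[OF v01 N(1), of "Suc m"] N(1) by linarith
  then have "d (mv_pow v (Suc m)) = d (mv_pow v N)"
    by simp
  also have "\<dots> = mv_odot (mv_pow v (N - 1)) (d v)"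
    using pow N(2) by auto
  finally show ?thesis
    using vanish[of "N - 1"] vanish[of m] N(2) False by simp
qed

lemma Ln_bounds:
  assumes "x \<in> Ln n"
  shows "0 \<le> x \<and> x \<le> 1"
proof -
  obtain k where k: "k \<le> n - 1" "x = real k / (real n - 1)"
    using assms by (auto simp: Ln_def)
  show ?thesis
  proof (cases "n = 0")
    case False
    then have "real k \<le> real n - 1" "0 \<le> real n - 1"
      using k(1) by linarith+
    then show ?thesis
      using k(2) by (auto simp: divide_le_eq_1)
  qed (use k in simp)
qed

lemma Ln_elem: "k \<le> n - 1 \<Longrightarrow> real k / (real n - 1) \<in> Ln n"
  by (auto simp: Ln_def)

lemma mv_pow_chain_generator:
  assumes "0 < N"
  shows "mv_pow ((real N - 1) / real N) m = real (N - m) / real N"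
proof (induction m)
  case 0
  show ?case using assms by simp
next
  case (Suc m)
  have "(real N - 1) / real N + r / real N - 1 = (r - 1) / real N" for r
    using assms by (simp add: field_simps)
  moreover have "max 0 ((real (N - m) - 1) / real N) = real (N - Suc m) / real N"
  proof (cases "m < N")
    case True
    then have "real (N - m) - 1 = real (N - Suc m)"
      by (simp add: of_nat_diff)
    then show ?thesis
      by simp
  next
    case False
    then show ?thesis
      using assms by (simp add: max_def)
  qed
  ultimately show ?case
    using Suc.IH by (simp only: mv_pow.simps mv_odot_eq)
qed

lemma mv_pow_Ln_generator:
  assumes "n \<ge> 2"
  shows "mv_pow ((real n - 2) / (real n - 1)) m = real (n - 1 - m) / (real n - 1)"
proof -
  have "real (n - 1) = real n - 1" "real (n - 1) - 1 = real n - 2"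
    using assms by (simp_all add: of_nat_diff)
  then show ?thesis
    using mv_pow_chain_generator[of "n - 1" m] assms by simp
qed

lemma Ln_eq_one_or_pow:
  assumes "n \<ge> 2" "x \<in> Ln n"
  shows "x = 1 \<or> (\<exists>m. x = mv_pow ((real n - 2) / (real n - 1)) (Suc m))"
proof -
  obtain k where k: "k \<le> n - 1" "x = real k / (real n - 1)"
    using assms(2) by (auto simp: Ln_def)
  show ?thesis
  proof (cases "k = n - 1")
    case True
    then show ?thesis using k assms(1) by (simp add: of_nat_diff)
  next
    case False
    then have "x = mv_pow ((real n - 2) / (real n - 1)) (Suc (n - 2 - k))"
      using k assms(1) by (simp add: mv_pow_Ln_generator Suc_diff_Suc)
    then show ?thesis by blast
  qed
qed

theorem theorem3p10:
  fixes n :: nat and d :: "real \<Rightarrow> real"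
  assumes "n \<ge> 2"
    and "\<forall>x\<in>Ln n. d x \<in> Ln n"
    and "mv_le (d ((real n - 2) / (real n - 1))) ((real n - 2) / (real n - 1))"
  shows "odot_join_derivation (Ln n) d \<longleftrightarrow>
    ((\<forall>m\<in>{1..n - 1}. d (mv_pow ((real n - 2) / (real n - 1)) m) =
        mv_odot (mv_pow ((real n - 2) / (real n - 1)) (m - 1)) (d ((real n - 2) / (real n - 1))))
     \<and> mv_le (mv_odot ((real n - 2) / (real n - 1)) (d 1)) (d ((real n - 2) / (real n - 1))))"
proof -
  define v where "v = (real n - 2) / (real n - 1)"
  have pow: "mv_pow v m \<in> Ln n" for m
    using assms(1) by (simp add: v_def mv_pow_Ln_generator Ln_elem)
  have "0 \<le> v"
    using assms(1) by (simp add: v_def)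
  then have v: "v \<in> Ln n" and one: "1 \<in> Ln n"
    using pow[of 1] pow[of 0] mv_pow_one by auto
  have Ln01: "Ln n \<subseteq> {0..1}"
    using Ln_bounds by auto
  have vanish: "mv_pow v (n - 1) = 0"
    using assms(1) by (simp add: v_def mv_pow_Ln_generator)
  show ?thesis
    unfolding v_def[symmetric] mv_le_iff
  proof (intro iffI conjI ballI)
    fix m assume "odot_join_derivation (Ln n) d" "m \<in> {1..n - 1}"
    then show "d (mv_pow v m) = mv_odot (mv_pow v (m - 1)) (d v)"
      using odot_join_derivation_pow[OF _ Ln01 assms(2) v pow, of "m - 1"] by simp
  next
    assume "odot_join_derivation (Ln n) d"
    then show "mv_odot v (d 1) \<le> d v"
      using odot_join_derivation_unit[OF _ Ln01 assms(2) v one] by blast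
  next
    assume "(\<forall>m\<in>{1..n - 1}. d (mv_pow v m) = mv_odot (mv_pow v (m - 1)) (d v))
      \<and> mv_odot v (d 1) \<le> d v"
    then have formula: "\<forall>m\<in>{1..n - 1}. d (mv_pow v m) = mv_odot (mv_pow v (m - 1)) (d v)"
      and unit: "mv_odot v (d 1) \<le> d v"
      by auto
    have "d v \<le> v"
      using assms(3) by (simp add: v_def mv_le_iff)
    then have "d (mv_pow v (Suc m)) = mv_odot (mv_pow v m) (d v)" for m
      using pow_formula_extend[OF _ _ vanish _ _ formula] Ln_bounds[OF v] assms(1) by simp
    then show "odot_join_derivation (Ln n) d"
      using odot_join_derivationI_pow[OF Ln01 assms(2) _ v _ unit] Ln_eq_one_or_pow[OF assms(1)]
      by (simp add: v_def)
  qed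
qed

end
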